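(* Let $\mathcal{X}$ be a Hilbert module over a pro-$C^*$-algebra $\mathcal{A}$, let $K\in Hom^*_{\mathcal{A}}(\mathcal{X})$, let $\{\xi_i\}_{i\in I}$ be a $K$-frame for $\mathcal{X}$, and let $T\in Hom^*_{\mathcal{A}}(\mathcal{X})$ be uniformly bounded and a co-isometry (i.e. $TT^*=I$) with $TK=KT$. Then $\{T\xi_i\}_{i\in I}$ is a $K$-frame for $\mathcal{X}$.
   Context: A pro-$C^*$-algebra $\mathcal{A}$ is a complete Hausdorff topological $*$-algebra whose topology is given by its continuous $C^*$-seminorms $S(\mathcal{A})$. A Hilbert $\mathcal{A}$-module $\mathcal{X}$ is a left $\mathcal{A}$-module with an $\mathcal{A}$-valued inner product, complete for $\bar p_{\mathcal{X}}(\xi)=\sqrt{p(\langle\xi,\xi\rangle)}$. $Hom^*_{\mathcal{A}}(\mathcal{X})$ denotes adjointable bounded $\mathcal{A}$-module maps; $T$ is uniformly bounded if there is a single $C>0$ with $\bar p_{\mathcal{X}}(T\xi)\le C\bar p_{\mathcal{X}}(\xi)$ for all $p,\xi$. A sequence $\{\xi_i\}_{i\in I}$ ($I$ countable) is a $K$-frame for $\mathcal{X}$ if $\sum_i\langle\xi,\xi_i\rangle\langle\xi_i,\xi\rangle$ converges in $\mathcal{A}$ and there are $A,B>0$ with $A\langle K^*\xi,K^*\xi\rangle\le\sum_i\langle\xi,\xi_i\rangle\langle\xi_i,\xi\rangle\le B\langle\xi,\xi\rangle$ for all $\xi\in\mathcal{X}$. *)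

theory Defs
  imports "HOL-Analysis.Analysis"
begin

text \<open>A pro-C*-algebra is modelled on a type 'a of class ring (not necessarily unital),
together with a complex scalar multiplication, an involution and the family S(A)
of all continuous C*-seminorms, which generates the topology.\<close>

record 'a proalg =
  scA   :: "complex \<Rightarrow> 'a \<Rightarrow> 'a"
  star  :: "'a \<Rightarrow> 'a"
  semis :: "('a \<Rightarrow> real) set"

definition star_algebra :: "('a::ring, 'b) proalg_scheme \<Rightarrow> bool" where
  "star_algebra A \<longleftrightarrow>
     (\<forall>x. scA A 1 x = x) \<and>
     (\<forall>a b x. scA A a (scA A b x) = scA A (a * b) x) \<and>
     (\<forall>a x y. scA A a (x + y) = scA A a x + scA A a y) \<and>
     (\<forall>a b x. scA A (a + b) x = scA A a x + scA A b x) \<and>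
     (\<forall>c x y. scA A c (x * y) = scA A c x * y \<and> scA A c (x * y) = x * scA A c y) \<and>
     (\<forall>x. star A (star A x) = x) \<and>
     (\<forall>x y. star A (x + y) = star A x + star A y) \<and>
     (\<forall>c x. star A (scA A c x) = scA A (cnj c) (star A x)) \<and>
     (\<forall>x y. star A (x * y) = star A y * star A x)"

definition cstar_seminorm :: "('a::ring, 'b) proalg_scheme \<Rightarrow> ('a \<Rightarrow> real) \<Rightarrow> bool" where
  "cstar_seminorm A p \<longleftrightarrow>
     (\<forall>x. 0 \<le> p x) \<and>
     (\<forall>x y. p (x + y) \<le> p x + p y) \<and>
     (\<forall>c x. p (scA A c x) = cmod c * p x) \<and>
     (\<forall>x y. p (x * y) \<le> p x * p y) \<and>
     (\<forall>x. p (star A x * x) = (p x)\<^sup>2)"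

text \<open>Cauchy filters (= Cauchy nets) and convergence w.r.t. a family of seminorms.\<close>

definition cauchy_fam :: "('v::ab_group_add \<Rightarrow> real) set \<Rightarrow> 'v filter \<Rightarrow> bool" where
  "cauchy_fam P F \<longleftrightarrow>
     (\<forall>p\<in>P. \<forall>e>0. \<forall>\<^sub>F (x, y) in F \<times>\<^sub>F F. p (x - y) < e)"

definition conv_fam :: "('v::ab_group_add \<Rightarrow> real) set \<Rightarrow> 'v filter \<Rightarrow> 'v \<Rightarrow> bool" where
  "conv_fam P F l \<longleftrightarrow> (\<forall>p\<in>P. \<forall>e>0. \<forall>\<^sub>F x in F. p (x - l) < e)"

definition complete_fam :: "('v::ab_group_add \<Rightarrow> real) set \<Rightarrow> bool" where
  "complete_fam P \<longleftrightarrow> (\<forall>F. F \<noteq> bot \<longrightarrow> cauchy_fam P F \<longrightarrow> (\<exists>l. conv_fam P F l))"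

definition has_sum_fam :: "('v::ab_group_add \<Rightarrow> real) set \<Rightarrow> ('i \<Rightarrow> 'v) \<Rightarrow> 'i set \<Rightarrow> 'v \<Rightarrow> bool" where
  "has_sum_fam P f I s \<longleftrightarrow> conv_fam P (filtermap (\<lambda>F. sum f F) (finite_subsets_at_top I)) s"

definition pro_cstar_algebra :: "('a::ring, 'b) proalg_scheme \<Rightarrow> bool" where
  "pro_cstar_algebra A \<longleftrightarrow>
     star_algebra A \<and>
     semis A \<noteq> {} \<and>
     (\<forall>p\<in>semis A. cstar_seminorm A p) \<and>
     (\<forall>p\<in>semis A. \<forall>q\<in>semis A. \<exists>r\<in>semis A. \<forall>x. p x \<le> r x \<and> q x \<le> r x) \<and>
     \<comment> \<open>S(A) consists of ALL continuous C*-seminorms for the topology it generates\<close>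
     (\<forall>q. cstar_seminorm A q \<and> (\<exists>p\<in>semis A. \<exists>C. \<forall>x. q x \<le> C * p x) \<longrightarrow> q \<in> semis A) \<and>
     \<comment> \<open>Hausdorff\<close>
     (\<forall>x. (\<forall>p\<in>semis A. p x = 0) \<longrightarrow> x = 0) \<and>
     \<comment> \<open>complete\<close>
     complete_fam (semis A)"

text \<open>Positivity and order: in a pro-C*-algebra the positive elements are exactly those of the
form b* b.\<close>

definition pos :: "('a::ring, 'b) proalg_scheme \<Rightarrow> 'a \<Rightarrow> bool" where
  "pos A a \<longleftrightarrow> (\<exists>b. a = star A b * b)"

definition le_A :: "('a::ring, 'b) proalg_scheme \<Rightarrow> 'a \<Rightarrow> 'a \<Rightarrow> bool" where
  "le_A A a b \<longleftrightarrow> pos A (b - a)"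

record ('a, 'x) hmod =
  act :: "'a \<Rightarrow> 'x \<Rightarrow> 'x"
  scX :: "complex \<Rightarrow> 'x \<Rightarrow> 'x"
  ip  :: "'x \<Rightarrow> 'x \<Rightarrow> 'a"

definition seminormX :: "('a::ring, 'b) proalg_scheme \<Rightarrow> ('a, 'x, 'c) hmod_scheme
      \<Rightarrow> ('a \<Rightarrow> real) \<Rightarrow> 'x \<Rightarrow> real" where
  "seminormX A M p \<xi> = sqrt (p (ip M \<xi> \<xi>))"

definition hilbert_module ::
    "('a::ring, 'b) proalg_scheme \<Rightarrow> ('a, 'x::ab_group_add, 'c) hmod_scheme \<Rightarrow> bool" where
  "hilbert_module A M \<longleftrightarrow>
     pro_cstar_algebra A \<and>
     \<comment> \<open>left A-module and complex vector space, compatibly\<close>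
     (\<forall>a x y. act M a (x + y) = act M a x + act M a y) \<and>
     (\<forall>a b x. act M (a + b) x = act M a x + act M b x) \<and>
     (\<forall>a b x. act M (a * b) x = act M a (act M b x)) \<and>
     (\<forall>x. scX M 1 x = x) \<and>
     (\<forall>a b x. scX M a (scX M b x) = scX M (a * b) x) \<and>
     (\<forall>a x y. scX M a (x + y) = scX M a x + scX M a y) \<and>
     (\<forall>a b x. scX M (a + b) x = scX M a x + scX M b x) \<and>
     (\<forall>c a x. scX M c (act M a x) = act M (scA A c a) x \<and> scX M c (act M a x) = act M a (scX M c x)) \<and>
     \<comment> \<open>A-valued inner product (linear in the first variable)\<close>
     (\<forall>x y z. ip M (x + y) z = ip M x z + ip M y z) \<and>
     (\<forall>a x y. ip M (act M a x) y = a * ip M x y) \<and>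
     (\<forall>c x y. ip M (scX M c x) y = scA A c (ip M x y)) \<and>
     (\<forall>x y. star A (ip M x y) = ip M y x) \<and>
     (\<forall>x. pos A (ip M x x)) \<and>
     (\<forall>x. ip M x x = 0 \<longrightarrow> x = 0) \<and>
     \<comment> \<open>complete w.r.t. the seminorms p-bar\<close>
     complete_fam ((\<lambda>p. seminormX A M p) ` semis A)"

definition is_adjoint :: "('a, 'x, 'c) hmod_scheme \<Rightarrow> ('x \<Rightarrow> 'x) \<Rightarrow> ('x \<Rightarrow> 'x) \<Rightarrow> bool" where
  "is_adjoint M T T' \<longleftrightarrow> (\<forall>x y. ip M (T x) y = ip M x (T' y))"

definition adj :: "('a, 'x, 'c) hmod_scheme \<Rightarrow> ('x \<Rightarrow> 'x) \<Rightarrow> ('x \<Rightarrow> 'x)" where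
  "adj M T = (SOME T'. is_adjoint M T T')"

definition homstar ::
    "('a::ring, 'b) proalg_scheme \<Rightarrow> ('a, 'x::ab_group_add, 'c) hmod_scheme \<Rightarrow> ('x \<Rightarrow> 'x) set" where
  "homstar A M = {T.
     (\<forall>x y. T (x + y) = T x + T y) \<and>
     (\<forall>a x. T (act M a x) = act M a (T x)) \<and>
     (\<forall>c x. T (scX M c x) = scX M c (T x)) \<and>
     (\<forall>p\<in>semis A. \<exists>C. \<forall>x. seminormX A M p (T x) \<le> C * seminormX A M p x) \<and>
     (\<exists>T'. is_adjoint M T T')}"

definition unif_bounded ::
    "('a::ring, 'b) proalg_scheme \<Rightarrow> ('a, 'x, 'c) hmod_scheme \<Rightarrow> ('x \<Rightarrow> 'x) \<Rightarrow> bool" where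
  "unif_bounded A M T \<longleftrightarrow>
     (\<exists>C>0. \<forall>p\<in>semis A. \<forall>x. seminormX A M p (T x) \<le> C * seminormX A M p x)"

definition kframe ::
    "('a::ring, 'b) proalg_scheme \<Rightarrow> ('a, 'x, 'c) hmod_scheme \<Rightarrow> ('x \<Rightarrow> 'x)
       \<Rightarrow> 'i set \<Rightarrow> ('i \<Rightarrow> 'x) \<Rightarrow> bool" where
  "kframe A M K I \<xi> \<longleftrightarrow>
     countable I \<and>
     (\<forall>x. \<exists>s. has_sum_fam (semis A) (\<lambda>i. ip M x (\<xi> i) * ip M (\<xi> i) x) I s) \<and>
     (\<exists>a b::real. a > 0 \<and> b > 0 \<and>
       (\<forall>x s. has_sum_fam (semis A) (\<lambda>i. ip M x (\<xi> i) * ip M (\<xi> i) x) I s \<longrightarrow>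
          le_A A (scA A (complex_of_real a) (ip M (adj M K x) (adj M K x))) s \<and>
          le_A A s (scA A (complex_of_real b) (ip M x x))))"

end

theory Submission
  imports Defs
begin

text \<open>Since \<open>T T\<^sup>* = I\<close>, the adjoint \<open>T\<^sup>*\<close> preserves the inner product, and the
frame sum of \<open>{T \<xi>\<^sub>i}\<close> at \<open>x\<close> is the frame sum of \<open>{\<xi>\<^sub>i}\<close> at \<open>T\<^sup>* x\<close>. From \<open>TK = KT\<close>
we get \<open>K\<^sup>* T\<^sup>* = T\<^sup>* K\<^sup>*\<close>, so \<open>\<langle>K\<^sup>* T\<^sup>* x, K\<^sup>* T\<^sup>* x\<rangle> = \<langle>K\<^sup>* x, K\<^sup>* x\<rangle>\<close> and
\<open>\<langle>T\<^sup>* x, T\<^sup>* x\<rangle> = \<langle>x, x\<rangle>\<close>: the frame inequalities of \<open>{\<xi>\<^sub>i}\<close> at \<open>T\<^sup>* x\<close> are those of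
\<open>{T \<xi>\<^sub>i}\<close> at \<open>x\<close>, with the same bounds.\<close>

lemma ip_diff_left:
  assumes "hilbert_module A M"
  shows "ip M (u - v) w = ip M u w - ip M v w"
proof -
  have "ip M u w = ip M (u - v) w + ip M v w"
    using assms unfolding hilbert_module_def by (metis diff_add_cancel)
  then show ?thesis by (simp add: algebra_simps)
qed

lemma ip_swap:
  assumes "hilbert_module A M"
  shows "ip M y x = star A (ip M x y)"
  using assms unfolding hilbert_module_def by simp

lemma hilbert_module_ext_right:
  assumes hm: "hilbert_module A M" and eq: "\<And>z. ip M z u = ip M z v"
  shows "u = v"
proof -
  have "ip M u z = ip M v z" for z
    using eq ip_swap[OF hm] by metis
  then have "ip M (u - v) (u - v) = 0"
    using ip_diff_left[OF hm] by simp
  then have "u - v = 0"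
    using hm unfolding hilbert_module_def by blast
  then show ?thesis by simp
qed

lemma is_adjoint_right:
  assumes "hilbert_module A M" and "is_adjoint M T T'"
  shows "ip M x (T y) = ip M (T' x) y"
  using assms ip_swap unfolding is_adjoint_def by metis

lemma is_adjoint_adj:
  assumes "T \<in> homstar A M"
  shows "is_adjoint M T (adj M T)"
proof -
  obtain T' where "is_adjoint M T T'"
    using assms unfolding homstar_def by blast
  then show ?thesis
    unfolding adj_def by (rule someI[where P = "is_adjoint M T"])
qed

lemma is_adjoint_commute:
  assumes hm: "hilbert_module A M"
    and T: "is_adjoint M T T'" and K: "is_adjoint M K K'"
    and comm: "T \<circ> K = K \<circ> T"
  shows "K' (T' x) = T' (K' x)"
proof (rule hilbert_module_ext_right[OF hm])
  fix z
  have "ip M z (K' (T' x)) = ip M (T (K z)) x"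
    using T K unfolding is_adjoint_def by simp
  also have "\<dots> = ip M (K (T z)) x"
    using comm by (metis comp_apply)
  also have "\<dots> = ip M z (T' (K' x))"
    using T K unfolding is_adjoint_def by simp
  finally show "ip M z (K' (T' x)) = ip M z (T' (K' x))" .
qed

lemma coisometry_adjoint_isometric:
  assumes "is_adjoint M T T'" and "T \<circ> T' = id"
  shows "ip M (T' x) (T' x) = ip M x x"
  using assms unfolding is_adjoint_def by (metis comp_apply id_apply)

lemma frame_term_adjoint:
  assumes "hilbert_module A M" and "is_adjoint M T T'"
  shows "ip M x (T y) * ip M (T y) x = ip M (T' x) y * ip M y (T' x)"
  using assms is_adjoint_right unfolding is_adjoint_def by metis

lemma kframe_pullback_isometry:
  assumes frame: "kframe A M K I \<xi>"
    and terms: "\<And>x i. ip M x (\<eta> i) * ip M (\<eta> i) x = ip M (S x) (\<xi> i) * ip M (\<xi> i) (S x)"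
    and iso: "\<And>x. ip M (S x) (S x) = ip M x x"
    and iso_K: "\<And>x. ip M (adj M K (S x)) (adj M K (S x)) = ip M (adj M K x) (adj M K x)"
  shows "kframe A M K I \<eta>"
proof -
  have sums: "(\<lambda>i. ip M x (\<eta> i) * ip M (\<eta> i) x) = (\<lambda>i. ip M (S x) (\<xi> i) * ip M (\<xi> i) (S x))"
    for x using terms by simp
  obtain a b :: real where "a > 0" "b > 0" and bounds:
    "\<And>x s. has_sum_fam (semis A) (\<lambda>i. ip M x (\<xi> i) * ip M (\<xi> i) x) I s \<Longrightarrow>
       le_A A (scA A (complex_of_real a) (ip M (adj M K x) (adj M K x))) s \<and>
       le_A A s (scA A (complex_of_real b) (ip M x x))"
    using frame unfolding kframe_def by blast
  moreover have "countable I"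
    and "\<forall>x. \<exists>s. has_sum_fam (semis A) (\<lambda>i. ip M x (\<xi> i) * ip M (\<xi> i) x) I s"
    using frame unfolding kframe_def by blast+
  moreover have "le_A A (scA A (complex_of_real a) (ip M (adj M K x) (adj M K x))) s \<and>
       le_A A s (scA A (complex_of_real b) (ip M x x))"
    if "has_sum_fam (semis A) (\<lambda>i. ip M x (\<eta> i) * ip M (\<eta> i) x) I s" for x s
    using bounds[of "S x" s] that iso iso_K unfolding sums by simp
  ultimately show ?thesis
    unfolding kframe_def sums by blast
qed

theorem theorem4p13:
  fixes A :: "'a::ring proalg"
    and M :: "('a, 'x::ab_group_add) hmod"
    and K T :: "'x \<Rightarrow> 'x"
    and I :: "'i set"
    and \<xi> :: "'i \<Rightarrow> 'x"
  assumes "hilbert_module A M"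
    and "K \<in> homstar A M"
    and "kframe A M K I \<xi>"
    and "T \<in> homstar A M"
    and "unif_bounded A M T"
    and "T \<circ> adj M T = id"
    and "T \<circ> K = K \<circ> T"
  shows "kframe A M K I (\<lambda>i. T (\<xi> i))"
proof (rule kframe_pullback_isometry[where S = "adj M T"])
  have T: "is_adjoint M T (adj M T)" and K: "is_adjoint M K (adj M K)"
    using assms(2,4) by (simp_all add: is_adjoint_adj)
  show "kframe A M K I \<xi>" by fact
  show "ip M x (T (\<xi> i)) * ip M (T (\<xi> i)) x
      = ip M (adj M T x) (\<xi> i) * ip M (\<xi> i) (adj M T x)" for x i
    using frame_term_adjoint[OF assms(1) T] .
  show iso: "ip M (adj M T x) (adj M T x) = ip M x x" for x
    using coisometry_adjoint_isometric[OF T assms(6)] .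
  show "ip M (adj M K (adj M T x)) (adj M K (adj M T x)) = ip M (adj M K x) (adj M K x)" for x
    using is_adjoint_commute[OF assms(1) T K assms(7)] iso by metis
qed

end
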